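(* For every $C>0$, the optimal solution $w^*_C$ lies in the closed Euclidean ball $$\Big\| w^*_C - \tfrac12\Big(\hat w - \tfrac{C}{\tilde C}(g-\hat w)\Big)\Big\|^2 \le \Big(\tfrac12\Big\|\hat w + \tfrac{C}{\tilde C}(g-\hat w)\Big\|\Big)^2 .$$
   Context: Let $\{(x_i,y_i)\}_{i=1}^n\subset\mathbb R^d\times\{-1,1\}$ be a training set. Let $\ell:\{-1,1\}\times\mathbb R\to\mathbb R$ be convex in its second argument, and set $\ell_i(w):=\ell(y_i,w^\top x_i)$ for $w\in\mathbb R^d$ (a convex function on $\mathbb R^d$). For $C>0$ let $w^*_C$ be the (unique) minimizer over $w\in\mathbb R^d$ of $P_C(w)=\frac12\|w\|^2+C\sum_{i=1}^n\ell_i(w)$, where $\|\cdot\|$ is the Euclidean norm. Fix $\tilde C>0$ and an arbitrary vector $\hat w\in\mathbb R^d$ (an approximate solution for $\tilde C$); for each $i$ let $\xi_i\in\partial\ell_i(\hat w)$ be any subgradient of $\ell_i$ at $\hat w$, and set $g:=\hat w+\tilde C\sum_{i=1}^n\xi_i$ (a subgradient of $P_{\tilde C}$ at $\hat w$). *)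

theory Defs
  imports "HOL-Analysis.Analysis"
begin

definition is_subgradient :: "('a::real_inner \<Rightarrow> real) \<Rightarrow> 'a \<Rightarrow> 'a \<Rightarrow> bool" where
  "is_subgradient f w xi \<longleftrightarrow> (\<forall>v. f w + inner xi (v - w) \<le> f v)"

definition primal_obj ::
  "(real \<Rightarrow> real \<Rightarrow> real) \<Rightarrow> (nat \<Rightarrow> real ^ 'd) \<Rightarrow> (nat \<Rightarrow> real) \<Rightarrow> nat \<Rightarrow> real \<Rightarrow> real ^ 'd \<Rightarrow> real" where
  "primal_obj l x y n C w = (1/2) * (norm w)^2 + C * (\<Sum>i<n. l (y i) (inner w (x i)))"

end

theory Submission
  imports Defs
begin

text \<open>Put \<open>F w = C \<Sum>\<^sub>i \<ell>\<^sub>i w\<close> and \<open>s = \<Sum>\<^sub>i \<xi>\<^sub>i\<close>, so that \<open>P\<^sub>C w = \<parallel>w\<parallel>\<^sup>2/2 + F w\<close> and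
  \<open>(C / C\<^sub>0) (g - w\<^sub>0) = C s\<close>, where \<open>C\<^sub>0\<close>, \<open>w\<^sub>0\<close> are the given parameter and approximate solution.
  Optimality of the convex objective at \<open>w\<^sup>*\<close> says that \<open>-w\<^sup>*\<close> is a subgradient of \<open>F\<close> at \<open>w\<^sup>*\<close>,
  while \<open>C s\<close> is one at \<open>w\<^sub>0\<close>. Monotonicity of the subdifferential gives
  \<open>\<langle>w\<^sup>* + C s, w\<^sub>0 - w\<^sup>*\<rangle> \<ge> 0\<close>, and this inner product is exactly the difference of the two
  sides of the ball inequality.\<close>

lemma convex_on_sum_functions:
  assumes "finite I" "convex S" "\<And>i. i \<in> I \<Longrightarrow> convex_on S (f i)"
  shows "convex_on S (\<lambda>x. \<Sum>i\<in>I. f i x)"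
  using assms by (induction I rule: finite_induct) (auto simp: convex_on_const)

lemma convex_on_compose_linear:
  fixes h :: "'a::real_vector \<Rightarrow> 'b::real_vector"
  assumes "linear h" "convex_on UNIV f"
  shows "convex_on UNIV (\<lambda>x. f (h x))"
  using assms by (simp add: convex_on_def linear_add linear_scale)

lemma is_subgradient_cmult:
  assumes "0 \<le> c" "is_subgradient f w a"
  shows "is_subgradient (\<lambda>v. c * f v) w (c *\<^sub>R a)"
  unfolding is_subgradient_def
proof
  fix v
  have "c * (f w + inner a (v - w)) \<le> c * f v"
    using assms by (intro mult_left_mono) (auto simp: is_subgradient_def)
  then show "c * f w + inner (c *\<^sub>R a) (v - w) \<le> c * f v"
    by (simp add: distrib_left)
qed

lemma is_subgradient_sum:
  assumes "\<And>i. i \<in> I \<Longrightarrow> is_subgradient (f i) w (a i)"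
  shows "is_subgradient (\<lambda>v. \<Sum>i\<in>I. f i v) w (\<Sum>i\<in>I. a i)"
  unfolding is_subgradient_def
proof
  fix v
  have "(\<Sum>i\<in>I. f i w + inner (a i) (v - w)) \<le> (\<Sum>i\<in>I. f i v)"
    using assms by (intro sum_mono) (auto simp: is_subgradient_def)
  then show "(\<Sum>i\<in>I. f i w) + inner (\<Sum>i\<in>I. a i) (v - w) \<le> (\<Sum>i\<in>I. f i v)"
    by (simp add: sum.distrib inner_sum_left)
qed

lemma is_subgradient_monotone:
  assumes "is_subgradient f u a" "is_subgradient f v b"
  shows "0 \<le> inner (a - b) (u - v)"
  using assms unfolding is_subgradient_def
  by (smt (verit, best) inner_diff_left inner_minus_right minus_diff_eq)

lemma nonneg_of_nonneg_add_small_multiples: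
  fixes a b :: real
  assumes "\<And>t. 0 < t \<Longrightarrow> t \<le> 1 \<Longrightarrow> 0 \<le> a + t * b"
  shows "0 \<le> a"
proof -
  have "((\<lambda>t. a + t * b) \<longlongrightarrow> a) (at_right 0)"
    by (auto intro!: tendsto_eq_intros)
  moreover have "\<forall>\<^sub>F t in at_right 0. 0 \<le> a + t * b"
    using eventually_at_right_real[of 0 1] assms by (auto elim: eventually_mono)
  ultimately show ?thesis
    by (auto intro: tendsto_lowerbound)
qed

lemma is_subgradient_neg_of_minimizer:
  fixes f :: "'a::real_inner \<Rightarrow> real"
  assumes conv: "convex_on UNIV f"
    and min: "\<And>v. (1/2) * (norm w)^2 + f w \<le> (1/2) * (norm v)^2 + f v"
  shows "is_subgradient f w (- w)"
  unfolding is_subgradient_def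
proof
  fix v
  define d where "d = v - w"
  have "0 \<le> (inner w d + f v - f w) + t * ((norm d)^2 / 2)" if t: "0 < t" "t \<le> 1" for t
  proof -
    have "(1/2) * (norm w)^2 + f w \<le> (1/2) * (norm (w + t *\<^sub>R d))^2 + f (w + t *\<^sub>R d)"
      by (rule min)
    also have "f (w + t *\<^sub>R d) \<le> (1 - t) * f w + t * f v"
      using convex_onD[OF conv, of t w v] t by (simp add: d_def algebra_simps)
    also have "(norm (w + t *\<^sub>R d))^2 = (norm w)^2 + 2 * t * inner w d + t^2 * (norm d)^2"
      unfolding power2_norm_eq_inner
      by (simp add: inner_add_left inner_add_right inner_commute power2_eq_square algebra_simps)
    finally have "0 \<le> t * ((inner w d + f v - f w) + t * ((norm d)^2 / 2))"
      by (simp add: algebra_simps power2_eq_square)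
    then show ?thesis
      using t by (simp add: zero_le_mult_iff)
  qed
  then have "0 \<le> inner w d + f v - f w"
    by (rule nonneg_of_nonneg_add_small_multiples)
  then show "f w + inner (- w) (v - w) \<le> f v"
    by (simp add: d_def)
qed

lemma norm_diff_half_sq_eq:
  fixes u v w :: "'a::real_inner"
  shows "(norm (w - (1/2) *\<^sub>R (v - u)))^2 = ((1/2) * norm (v + u))^2 - inner (w + u) (v - w)"
  unfolding power_mult_distrib power2_norm_eq_inner
  by (simp add: power2_eq_square inner_add_left inner_add_right
      inner_diff_left inner_diff_right inner_commute algebra_simps)

theorem mainTheorem1:
  fixes l :: "real \<Rightarrow> real \<Rightarrow> real"
    and x :: "nat \<Rightarrow> real ^ 'd"
    and y :: "nat \<Rightarrow> real"
    and n :: nat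
    and Ct C :: real
    and wh ws :: "real ^ 'd"
    and xi :: "nat \<Rightarrow> real ^ 'd"
  assumes labels: "\<forall>i<n. y i \<in> {-1, 1}"
    and conv: "\<forall>s\<in>{-1, 1::real}. convex_on UNIV (l s)"
    and Ct_pos: "Ct > 0"
    and subg: "\<forall>i<n. is_subgradient (\<lambda>w. l (y i) (inner w (x i))) wh (xi i)"
    and C_pos: "C > 0"
    and opt: "\<forall>w. primal_obj l x y n C ws \<le> primal_obj l x y n C w"
  shows "let g = wh + Ct *\<^sub>R (\<Sum>i<n. xi i) in
     (norm (ws - (1/2) *\<^sub>R (wh - (C / Ct) *\<^sub>R (g - wh))))^2
       \<le> ((1/2) * norm (wh + (C / Ct) *\<^sub>R (g - wh)))^2"
proof -
  define F where "F w = C * (\<Sum>i<n. l (y i) (inner w (x i)))" for w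
  define s where "s = (\<Sum>i<n. xi i)"
  have loss_convex: "convex_on UNIV (\<lambda>w. l (y i) (inner w (x i)))" if "i < n" for i
    using conv labels that
    by (intro convex_on_compose_linear[OF bounded_linear_inner_left[THEN bounded_linear.linear]]) auto
  have "convex_on UNIV F"
    unfolding F_def using C_pos loss_convex
    by (auto intro!: convex_on_cmul convex_on_sum_functions)
  moreover have "(1/2) * (norm ws)^2 + F ws \<le> (1/2) * (norm w)^2 + F w" for w
    using opt by (simp add: F_def primal_obj_def)
  ultimately have at_ws: "is_subgradient F ws (- ws)"
    by (rule is_subgradient_neg_of_minimizer)
  have "is_subgradient (\<lambda>w. \<Sum>i<n. l (y i) (inner w (x i))) wh s"
    unfolding s_def using subg by (auto intro: is_subgradient_sum)
  then have at_wh: "is_subgradient F wh (C *\<^sub>R s)"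
    unfolding F_def using C_pos by (auto intro: is_subgradient_cmult)
  have step: "(C / Ct) *\<^sub>R (wh + Ct *\<^sub>R s - wh) = C *\<^sub>R s"
    using Ct_pos by simp
  have "0 \<le> inner (ws + C *\<^sub>R s) (wh - ws)"
    using is_subgradient_monotone[OF at_wh at_ws] by (simp add: add.commute)
  then show ?thesis
    unfolding Let_def s_def[symmetric] step norm_diff_half_sq_eq by simp
qed

end
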